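(* Let $m\neq 0$ and $k$ be real constants, let $\mathbf{q}_0,\mathbf{p}_0\in\mathbb{R}^3$ with $\mathbf{q}_0\neq 0$, and let $h_0>0$. Run the numerical scheme described in the context and assume that all quantities it produces are well defined for every $n\ge 0$ (all denominators nonzero). Then for every $n\ge 0$, with $q_n=|\mathbf q_n|$ and $S_n=\dfrac{h_n\,\mathbf q_n\cdot\mathbf p_n}{m\,q_n}$, $$\mathbf r_n=\mathbf q_n+\frac{h_n}{2m}\Big(\frac{S_n}{q_n+\sqrt{q_n^2+S_n^2}}-1\Big)\mathbf p_n .$$ (That is, the initialization formula expressing $\mathbf r_0$ through $\mathbf q_0,\mathbf p_0,h_0$ remains valid at every step of the iteration.)
   Context: The scheme is a discretization of the Kepler problem $\dot{\mathbf p}=-k\mathbf q/|\mathbf q|^3$, $\mathbf p=m\dot{\mathbf q}$ in $\mathbb{R}^3$. For a vector $\mathbf v$ write $v=|\mathbf v|$. Initialization: put $q_0=|\mathbf q_0|$, $$S_0=\frac{h_0\,\mathbf q_0\cdot\mathbf p_0}{m\,q_0},\qquad \mathbf r_0=\mathbf q_0+\frac{h_0}{2m}\Big(\frac{S_0}{q_0+\sqrt{q_0^2+S_0^2}}-1\Big)\mathbf p_0,\qquad \mathbf r_1=\mathbf r_0+\frac{h_0\mathbf p_0}{m},$$ and let $\delta\in[0,\pi/2)$ be defined by $\cos 2\delta=\dfrac{r_0^2+\mathbf r_0\cdot\mathbf P_0}{r_0\sqrt{r_0^2+2\mathbf r_0\cdot\mathbf P_0+\mathbf P_0^2}}$, where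 $\mathbf P_0=h_0\mathbf p_0/m$ (equivalently $\cos2\delta=\mathbf r_0\cdot\mathbf r_1/(r_0r_1)$). Iteration: for $n=0,1,2,\dots$, given $\mathbf r_n,\mathbf r_{n+1},\mathbf p_n,h_n$, define $$\mathbf p_{n+1}=\mathbf p_n-\frac{k h_n\,\mathbf r_{n+1}}{r_{n+1}^2 r_n\cos\delta},\qquad h_{n+1}=\frac{h_n}{\dfrac{2r_n\cos2\delta}{r_{n+1}}-1+\dfrac{k h_n^2}{m\,r_{n+1}^2 r_n\cos\delta}},$$ $$\mathbf r_{n+2}=\mathbf r_{n+1}+\frac{h_{n+1}\mathbf p_{n+1}}{m},\qquad \mathbf q_{n+1}=\frac{r_{n+2}\mathbf r_{n+1}+r_{n+1}\mathbf r_{n+2}}{r_{n+1}+r_{n+2}} .$$ The initial $\mathbf q_0$ is the given one. *)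

theory Defs
  imports "HOL-Analysis.Analysis"
begin

definition kS0 :: "real \<Rightarrow> real^3 \<Rightarrow> real^3 \<Rightarrow> real \<Rightarrow> real" where
  "kS0 m q0 p0 h0 = h0 * (q0 \<bullet> p0) / (m * norm q0)"

definition kr0 :: "real \<Rightarrow> real^3 \<Rightarrow> real^3 \<Rightarrow> real \<Rightarrow> real^3" where
  "kr0 m q0 p0 h0 = q0 + (h0 / (2 * m) *
      (kS0 m q0 p0 h0 / (norm q0 + sqrt ((norm q0)^2 + (kS0 m q0 p0 h0)^2)) - 1)) *\<^sub>R p0"

definition kr1 :: "real \<Rightarrow> real^3 \<Rightarrow> real^3 \<Rightarrow> real \<Rightarrow> real^3" where
  "kr1 m q0 p0 h0 = kr0 m q0 p0 h0 + (h0 / m) *\<^sub>R p0"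

definition kdelta :: "real \<Rightarrow> real^3 \<Rightarrow> real^3 \<Rightarrow> real \<Rightarrow> real" where
  "kdelta m q0 p0 h0 = arccos ((kr0 m q0 p0 h0 \<bullet> kr1 m q0 p0 h0)
        / (norm (kr0 m q0 p0 h0) * norm (kr1 m q0 p0 h0))) / 2"

text \<open>State at step n: (r_n, r_(n+1), p_n, h_n).\<close>
primrec kstate :: "real \<Rightarrow> real \<Rightarrow> real^3 \<Rightarrow> real^3 \<Rightarrow> real \<Rightarrow> nat
      \<Rightarrow> (real^3) \<times> (real^3) \<times> (real^3) \<times> real" where
  "kstate m k q0 p0 h0 0 = (kr0 m q0 p0 h0, kr1 m q0 p0 h0, p0, h0)"
| "kstate m k q0 p0 h0 (Suc n) =
     (let (a, b, p, h) = kstate m k q0 p0 h0 n;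
          d = kdelta m q0 p0 h0;
          p' = p - (k * h / ((norm b)^2 * norm a * cos d)) *\<^sub>R b;
          h' = h / (2 * norm a * cos (2 * d) / norm b - 1
                    + k * h^2 / (m * (norm b)^2 * norm a * cos d));
          b' = b + (h' / m) *\<^sub>R p'
      in (b, b', p', h'))"

definition kr :: "real \<Rightarrow> real \<Rightarrow> real^3 \<Rightarrow> real^3 \<Rightarrow> real \<Rightarrow> nat \<Rightarrow> real^3" where
  "kr m k q0 p0 h0 n = fst (kstate m k q0 p0 h0 n)"

definition kp :: "real \<Rightarrow> real \<Rightarrow> real^3 \<Rightarrow> real^3 \<Rightarrow> real \<Rightarrow> nat \<Rightarrow> real^3" where
  "kp m k q0 p0 h0 n = fst (snd (snd (kstate m k q0 p0 h0 n)))"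

definition kh :: "real \<Rightarrow> real \<Rightarrow> real^3 \<Rightarrow> real^3 \<Rightarrow> real \<Rightarrow> nat \<Rightarrow> real" where
  "kh m k q0 p0 h0 n = snd (snd (snd (kstate m k q0 p0 h0 n)))"

primrec kq :: "real \<Rightarrow> real \<Rightarrow> real^3 \<Rightarrow> real^3 \<Rightarrow> real \<Rightarrow> nat \<Rightarrow> real^3" where
  "kq m k q0 p0 h0 0 = q0"
| "kq m k q0 p0 h0 (Suc n) =
     (1 / (norm (kr m k q0 p0 h0 (Suc n)) + norm (kr m k q0 p0 h0 (Suc (Suc n))))) *\<^sub>R
     (norm (kr m k q0 p0 h0 (Suc (Suc n))) *\<^sub>R kr m k q0 p0 h0 (Suc n)
      + norm (kr m k q0 p0 h0 (Suc n)) *\<^sub>R kr m k q0 p0 h0 (Suc (Suc n)))"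

end

theory Submission
  imports Defs
begin

text \<open>
  For n \<ge> 1 the point q(n) is the weighted midpoint (|b| a + |a| b)/(|a| + |b|) of
  a = r(n) and b = r(n+1), and b - a = h(n) p(n)/m, so the claim is a geometric identity
  in the plane of a and b. With A = |a|, B = |b| one finds
  |q|^2 = 2AB(AB + a\<bullet>b)/(A + B)^2 and q\<bullet>(b - a) = (B - A)(AB + a\<bullet>b)/(A + B), hence
  S = |q|(B^2 - A^2)/(2AB) and |q| + sqrt(|q|^2 + S^2) = |q|(A + B)^2/(2AB). The quotient
  is therefore (B - A)/(A + B), and q - A/(A + B) (b - a) = a.
\<close>

definition weighted_midpoint :: "'a::real_normed_vector \<Rightarrow> 'a \<Rightarrow> 'a" where
  "weighted_midpoint a b = (1 / (norm a + norm b)) *\<^sub>R (norm b *\<^sub>R a + norm a *\<^sub>R b)"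

lemma kr_Suc_Suc:
  "kr m k q0 p0 h0 (Suc (Suc n))
     = kr m k q0 p0 h0 (Suc n) + (kh m k q0 p0 h0 (Suc n) / m) *\<^sub>R kp m k q0 p0 h0 (Suc n)"
proof -
  obtain a b p h where "kstate m k q0 p0 h0 n = (a, b, p, h)"
    by (metis prod.exhaust)
  then show ?thesis
    by (simp add: kr_def kh_def kp_def Let_def)
qed

lemma norm_weighted_midpoint_sq:
  fixes a b :: "'a::real_inner"
  shows "(norm (weighted_midpoint a b))\<^sup>2
           = 2 * norm a * norm b * (norm a * norm b + a \<bullet> b) / (norm a + norm b)\<^sup>2"
proof -
  have "(norm b *\<^sub>R a + norm a *\<^sub>R b) \<bullet> (norm b *\<^sub>R a + norm a *\<^sub>R b)
          = 2 * norm a * norm b * (norm a * norm b + a \<bullet> b)"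
    unfolding inner_add_left inner_add_right inner_scaleR_left inner_scaleR_right
    by (simp add: dot_square_norm inner_commute[of b a] algebra_simps power2_eq_square)
  then show ?thesis
    unfolding power2_norm_eq_inner weighted_midpoint_def inner_scaleR_left inner_scaleR_right
    by (simp add: power2_eq_square)
qed

lemma weighted_midpoint_inner_diff:
  fixes a b :: "'a::real_inner"
  shows "weighted_midpoint a b \<bullet> (b - a)
           = (norm b - norm a) * (norm a * norm b + a \<bullet> b) / (norm a + norm b)"
proof -
  have "(norm b *\<^sub>R a + norm a *\<^sub>R b) \<bullet> (b - a) = (norm b - norm a) * (norm a * norm b + a \<bullet> b)"
    unfolding inner_add_left inner_diff_right inner_scaleR_left
    by (simp add: dot_square_norm inner_commute[of b a] algebra_simps power2_eq_square)
  then show ?thesis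
    by (simp add: weighted_midpoint_def)
qed

lemma half_angle_quotient:
  fixes A B N S :: real
  assumes "A > 0" "B > 0" "N > 0" and S: "S = N * (B - A) * (A + B) / (2 * A * B)"
  shows "S / (N + sqrt (N\<^sup>2 + S\<^sup>2)) = (B - A) / (A + B)"
proof -
  have "sqrt (N\<^sup>2 + S\<^sup>2) = N * (A\<^sup>2 + B\<^sup>2) / (2 * A * B)"
    by (rule real_sqrt_unique) (use assms(1-3) in \<open>simp_all add: S field_simps power2_eq_square\<close>)
  then have "N + sqrt (N\<^sup>2 + S\<^sup>2) = N * (A + B) * (A + B) / (2 * A * B)"
    using assms(1-3) by (simp add: field_simps power2_eq_square)
  then show ?thesis
    using assms(1-3) by (simp add: S)
qed

lemma weighted_midpoint_quotient:
  fixes a b :: "'a::real_inner"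
  defines "q \<equiv> weighted_midpoint a b"
  defines "S \<equiv> q \<bullet> (b - a) / norm q"
  assumes "a \<noteq> 0" "b \<noteq> 0" "q \<noteq> 0"
  shows "S / (norm q + sqrt ((norm q)\<^sup>2 + S\<^sup>2)) = (norm b - norm a) / (norm a + norm b)"
proof -
  define A B N d where "A = norm a" and "B = norm b" and "N = norm q" and "d = a \<bullet> b"
  have pos: "A > 0" "B > 0" "N > 0"
    using assms by (simp_all add: A_def B_def N_def)
  have "N\<^sup>2 = 2 * A * B * (A * B + d) / (A + B)\<^sup>2"
    using norm_weighted_midpoint_sq[of a b] by (simp add: A_def B_def N_def d_def q_def)
  then have AB_d: "A * B + d = N\<^sup>2 * (A + B)\<^sup>2 / (2 * A * B)"
    using pos by (simp add: field_simps)
  have "S = (B - A) * (A * B + d) / (A + B) / N"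
    using weighted_midpoint_inner_diff[of a b] by (simp add: S_def A_def B_def N_def d_def q_def)
  also have "\<dots> = N * (B - A) * (A + B) / (2 * A * B)"
    unfolding AB_d using pos by (simp add: power2_eq_square divide_simps)
  finally have "S = N * (B - A) * (A + B) / (2 * A * B)" .
  from half_angle_quotient[OF pos this] show ?thesis
    by (simp add: A_def B_def N_def)
qed

lemma eq_weighted_midpoint_plus_correction:
  fixes a b :: "'a::real_inner"
  defines "q \<equiv> weighted_midpoint a b"
  defines "S \<equiv> q \<bullet> (b - a) / norm q"
  assumes "a \<noteq> 0" "b \<noteq> 0" "q \<noteq> 0"
  shows "a = q + (1 / 2 * (S / (norm q + sqrt ((norm q)\<^sup>2 + S\<^sup>2)) - 1)) *\<^sub>R (b - a)"
proof -
  have pos: "norm a + norm b > 0"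
    using assms by (simp add: add_pos_pos)
  have "1 / 2 * (S / (norm q + sqrt ((norm q)\<^sup>2 + S\<^sup>2)) - 1) = - norm a / (norm a + norm b)"
    using weighted_midpoint_quotient[OF assms(3-5)[unfolded q_def]] pos
    by (simp add: S_def q_def field_simps)
  moreover have "weighted_midpoint a b + (- norm a / (norm a + norm b)) *\<^sub>R (b - a)
                   = (1 / (norm a + norm b)) *\<^sub>R ((norm a + norm b) *\<^sub>R a)"
    by (simp add: weighted_midpoint_def divide_inverse algebra_simps)
  ultimately show ?thesis
    using pos by (simp add: q_def)
qed

theorem mainTheorem5:
  fixes m k h0 :: real and q0 p0 :: "real^3"
  defines "r \<equiv> kr m k q0 p0 h0" and "p \<equiv> kp m k q0 p0 h0"
      and "h \<equiv> kh m k q0 p0 h0" and "q \<equiv> kq m k q0 p0 h0"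
      and "\<delta> \<equiv> kdelta m q0 p0 h0"
  assumes "m \<noteq> 0" and "q0 \<noteq> 0" and "h0 > 0"
    and wd_r: "\<forall>n. r n \<noteq> 0"
    and wd_cos: "cos \<delta> \<noteq> 0"
    and wd_h: "\<forall>n. 2 * norm (r n) * cos (2 * \<delta>) / norm (r (Suc n)) - 1
                   + k * (h n)^2 / (m * (norm (r (Suc n)))^2 * norm (r n) * cos \<delta>) \<noteq> 0"
    and wd_q: "\<forall>n. q n \<noteq> 0"
  shows "\<forall>n. r n = q n + (h n / (2 * m) *
            ((h n * (q n \<bullet> p n) / (m * norm (q n)))
              / (norm (q n) + sqrt ((norm (q n))^2 + (h n * (q n \<bullet> p n) / (m * norm (q n)))^2))
             - 1)) *\<^sub>R p n" (is "\<forall>n. ?claim n")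
proof
  fix n
  show "?claim n"
  proof (cases n)
    case 0
    then show ?thesis
      by (simp add: r_def q_def h_def p_def kr_def kh_def kp_def kr0_def kS0_def)
  next
    case (Suc j)
    let ?b = "r (Suc n)"
    have q_n: "q n = weighted_midpoint (r n) ?b"
      by (simp add: Suc q_def r_def weighted_midpoint_def)
    have step: "?b - r n = (h n / m) *\<^sub>R p n"
      by (simp add: Suc r_def h_def p_def kr_Suc_Suc)
    have S: "q n \<bullet> (?b - r n) / norm (q n) = h n * (q n \<bullet> p n) / (m * norm (q n))"
      by (simp add: step)
    have "r n = q n + (1 / 2 * (q n \<bullet> (?b - r n) / norm (q n)
                 / (norm (q n) + sqrt ((norm (q n))\<^sup>2 + (q n \<bullet> (?b - r n) / norm (q n))\<^sup>2))
                 - 1)) *\<^sub>R (?b - r n)"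
      using eq_weighted_midpoint_plus_correction[of "r n" ?b, folded q_n] wd_r wd_q by blast
    then show ?thesis
      unfolding S unfolding step by simp
  qed
qed

end
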